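(* Let $\tilde L$ be a minimum-size counterexample. Then there is a join-irreducible element $j$ of $\tilde L$ that is less than or equal to more than half of the meet-irreducible elements of $\tilde L$.
   Context: For a poset $P$, $x$ upper covers $y$ (and $y$ lower covers $x$) if $y<x$ with nothing strictly between. Join-irreducible: upper covers exactly one element; meet-irreducible: lower covers exactly one element. For $x\in P$, ${\uparrow}x=\{y: x\le y\}$. A counterexample is a finite lattice $L$ with $|L|>1$ in which every join-irreducible $j$ satisfies $|{\uparrow}j|>|L|/2$; a minimum-size counterexample is a counterexample $\tilde L$ such that no counterexample has fewer elements. *)

theory Defs
  imports Complex_Main "HOL-Algebra.Lattice"
begin

text \<open>Lattices are HOL-Algebra gorder records L satisfying the locale predicate
  lattice L (a partial order on carrier L, with equality as its equivalence,
  having binary joins and meets).\<close>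

definition upper_covers :: "('a, 'b) gorder_scheme \<Rightarrow> 'a \<Rightarrow> 'a \<Rightarrow> bool" where
  "upper_covers L x y \<longleftrightarrow> x \<in> carrier L \<and> y \<in> carrier L \<and> y \<sqsubset>\<^bsub>L\<^esub> x \<and>
     \<not> (\<exists>z\<in>carrier L. y \<sqsubset>\<^bsub>L\<^esub> z \<and> z \<sqsubset>\<^bsub>L\<^esub> x)"

definition join_irreducible :: "('a, 'b) gorder_scheme \<Rightarrow> 'a \<Rightarrow> bool" where
  "join_irreducible L j \<longleftrightarrow> j \<in> carrier L \<and> (\<exists>!y. upper_covers L j y)"

definition meet_irreducible :: "('a, 'b) gorder_scheme \<Rightarrow> 'a \<Rightarrow> bool" where
  "meet_irreducible L m \<longleftrightarrow> m \<in> carrier L \<and> (\<exists>!x. upper_covers L x m)"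

definition up_set :: "('a, 'b) gorder_scheme \<Rightarrow> 'a \<Rightarrow> 'a set" where
  "up_set L x = {y \<in> carrier L. x \<sqsubseteq>\<^bsub>L\<^esub> y}"

definition counterexample :: "('a, 'b) gorder_scheme \<Rightarrow> bool" where
  "counterexample L \<longleftrightarrow> lattice L \<and> finite (carrier L) \<and> card (carrier L) > 1 \<and>
     (\<forall>j. join_irreducible L j \<longrightarrow> real (card (up_set L j)) > real (card (carrier L)) / 2)"

text \<open>Every finite
  lattice is isomorphic to one whose carrier is a set of naturals, so quantifying over
  lattices on nat ranges over all finite lattices up to isomorphism.\<close>
definition min_counterexample :: "('a, 'b) gorder_scheme \<Rightarrow> bool" where
  "min_counterexample L \<longleftrightarrow> counterexample L \<and>
     \<not> (\<exists>L' :: nat gorder. counterexample L' \<and> card (carrier L') < card (carrier L))"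

end

theory Submission
  imports Defs
begin

text \<open>Let M be the set of meet-irreducible elements of a finite lattice L and K = L - M.
  A meet-irreducible element strictly below x and y is strictly below x \<sqinter> y, so K is closed
  under meets; as it contains the top, K is itself a lattice. For every join-irreducible a of K
  with lower cover c in K, a minimal element j of L with j \<sqsubseteq> a but not j \<sqsubseteq> c is join-irreducible
  in L, and the up-set of a in K is the up-set of j in L minus M. If every join-irreducible j of L
  were below at most half of M, then |up a| = |up j| - |up j \<inter> M| > |L|/2 - |M|/2 = |K|/2,
  so K would be a smaller counterexample; and if |K| = 1, the top of L is join-irreducible with
  a one-element up-set, which is impossible as |L| > 1.\<close>

lemma (in partial_order) lless_le_trans:
  assumes "x \<sqsubset> y" "y \<sqsubseteq> z" "x \<in> carrier L" "y \<in> carrier L" "z \<in> carrier L"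
  shows "x \<sqsubset> z"
  using assms le_trans[of x y z] le_antisym[of x y] by (auto simp: lless_eq)

lemma (in partial_order) finite_has_minimal:
  assumes "finite A" "A \<subseteq> carrier L" "A \<noteq> {}"
  shows "\<exists>m\<in>A. \<forall>y\<in>A. \<not> y \<sqsubset> m"
  using assms(1,3,2)
proof (induction A rule: finite_ne_induct)
  case (singleton x)
  then show ?case by (auto simp: lless_eq)
next
  case (insert a A)
  then obtain m where m: "m \<in> A" "\<forall>y\<in>A. \<not> y \<sqsubset> m" by auto
  show ?case
  proof (cases "a \<sqsubset> m")
    case True
    have "\<not> y \<sqsubset> a" if "y \<in> A" for y
      using lless_trans[of y a m] True m that insert.prems by auto
    then show ?thesis by (auto simp: lless_eq)
  next
    case False
    then show ?thesis using m by auto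
  qed
qed

lemma (in partial_order) lless_dual:
  "x \<sqsubset>\<^bsub>inv_gorder L\<^esub> y \<longleftrightarrow> y \<sqsubset> x"
  by (auto simp: lless_def eq_is_equal)

lemma (in partial_order) upper_covers_dual:
  "upper_covers (inv_gorder L) x y \<longleftrightarrow> upper_covers L y x"
  unfolding upper_covers_def lless_dual by auto

lemma (in partial_order) upper_cover_between:
  assumes "finite (carrier L)" "x \<in> carrier L" "y \<in> carrier L" "x \<sqsubset> y"
  shows "\<exists>z. upper_covers L z x \<and> z \<sqsubseteq> y"
proof -
  let ?A = "{z \<in> carrier L. x \<sqsubset> z \<and> z \<sqsubseteq> y}"
  have "finite ?A"
    by (rule finite_subset[OF _ assms(1)]) blast
  moreover have "y \<in> ?A"
    using assms by auto
  ultimately obtain z where z: "z \<in> ?A" and min: "\<forall>w\<in>?A. \<not> w \<sqsubset> z"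
    using finite_has_minimal[of ?A] by blast
  have "upper_covers L z x"
    unfolding upper_covers_def
  proof (intro conjI)
    show "\<not> (\<exists>w\<in>carrier L. x \<sqsubset> w \<and> w \<sqsubset> z)"
    proof
      assume "\<exists>w\<in>carrier L. x \<sqsubset> w \<and> w \<sqsubset> z"
      then obtain w where w: "w \<in> carrier L" "x \<sqsubset> w" "w \<sqsubset> z" by blast
      then have "w \<sqsubseteq> y"
        using z assms(3) le_trans[of w z y] by (auto simp: lless_eq)
      with w min show False by blast
    qed
  qed (use z assms in auto)
  then show ?thesis using z by auto
qed

lemma (in partial_order) lower_cover_between:
  assumes "finite (carrier L)" "x \<in> carrier L" "y \<in> carrier L" "x \<sqsubset> y"
  shows "\<exists>z. upper_covers L y z \<and> x \<sqsubseteq> z"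
proof -
  interpret dual: partial_order "inv_gorder L"
    by (rule dual_order)
  have "y \<sqsubset>\<^bsub>inv_gorder L\<^esub> x"
    using assms(4) by (simp add: lless_dual)
  then obtain z where "upper_covers (inv_gorder L) z y" "x \<sqsubseteq> z"
    using dual.upper_cover_between[of y x] assms(1-3) by auto
  then show ?thesis
    unfolding upper_covers_dual by blast
qed

lemma (in partial_order) join_irreducible_lower_cover_greatest:
  assumes "finite (carrier L)" "join_irreducible L a"
  obtains c where "upper_covers L a c" "\<And>b. b \<in> carrier L \<Longrightarrow> b \<sqsubset> a \<Longrightarrow> b \<sqsubseteq> c"
proof -
  from assms(2) obtain c where c: "upper_covers L a c" and uniq: "\<And>c'. upper_covers L a c' \<Longrightarrow> c' = c"
    by (auto simp: join_irreducible_def)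
  have "b \<sqsubseteq> c" if b: "b \<in> carrier L" "b \<sqsubset> a" for b
  proof -
    have "a \<in> carrier L"
      using c by (simp add: upper_covers_def)
    then obtain z where "upper_covers L a z" "b \<sqsubseteq> z"
      using lower_cover_between[OF assms(1) b(1) _ b(2)] by blast
    with uniq show ?thesis by blast
  qed
  with c that show ?thesis by blast
qed

lemma lattice_partial_orderI:
  assumes "partial_order B"
    and sup: "\<And>x y. x \<in> carrier B \<Longrightarrow> y \<in> carrier B \<Longrightarrow>
      \<exists>s\<in>carrier B. x \<sqsubseteq>\<^bsub>B\<^esub> s \<and> y \<sqsubseteq>\<^bsub>B\<^esub> s \<and> (\<forall>u\<in>carrier B. x \<sqsubseteq>\<^bsub>B\<^esub> u \<longrightarrow> y \<sqsubseteq>\<^bsub>B\<^esub> u \<longrightarrow> s \<sqsubseteq>\<^bsub>B\<^esub> u)"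
    and inf: "\<And>x y. x \<in> carrier B \<Longrightarrow> y \<in> carrier B \<Longrightarrow>
      \<exists>s\<in>carrier B. s \<sqsubseteq>\<^bsub>B\<^esub> x \<and> s \<sqsubseteq>\<^bsub>B\<^esub> y \<and> (\<forall>u\<in>carrier B. u \<sqsubseteq>\<^bsub>B\<^esub> x \<longrightarrow> u \<sqsubseteq>\<^bsub>B\<^esub> y \<longrightarrow> u \<sqsubseteq>\<^bsub>B\<^esub> s)"
  shows "lattice B"
proof (intro lattice.intro upper_semilattice.intro lower_semilattice.intro assms(1)
    upper_semilattice_axioms.intro lower_semilattice_axioms.intro)
  fix x y assume "x \<in> carrier B" "y \<in> carrier B"
  then show "\<exists>s. least B s (Upper B {x, y})"
    using sup[of x y] by (auto simp: least_def Upper_def)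
next
  fix x y assume "x \<in> carrier B" "y \<in> carrier B"
  then show "\<exists>s. greatest B s (Lower B {x, y})"
    using inf[of x y] by (auto simp: greatest_def Lower_def)
qed

text \<open>For C \<subseteq> carrier L and h = id this is the subposet on C; for a bijection h from C onto
  carrier L it is an isomorphic copy of L on C.\<close>

definition induced_order :: "('a \<Rightarrow> 'b) \<Rightarrow> 'a set \<Rightarrow> ('b, 'c) gorder_scheme \<Rightarrow> 'a gorder" where
  "induced_order h C L = \<lparr>carrier = C, eq = (=), le = (\<lambda>x y. h x \<sqsubseteq>\<^bsub>L\<^esub> h y)\<rparr>"

lemma induced_order_simps [simp]:
  "carrier (induced_order h C L) = C"
  "eq (induced_order h C L) = (=)"
  "x \<sqsubseteq>\<^bsub>induced_order h C L\<^esub> y \<longleftrightarrow> h x \<sqsubseteq>\<^bsub>L\<^esub> h y"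
  by (simp_all add: induced_order_def)

context partial_order
begin

lemma lless_induced_order:
  assumes "inj_on h C" "x \<in> C" "y \<in> C"
  shows "x \<sqsubset>\<^bsub>induced_order h C L\<^esub> y \<longleftrightarrow> h x \<sqsubset> h y"
  using assms by (auto simp: lless_def eq_is_equal dest: inj_onD)

lemma partial_order_induced_order:
  assumes "inj_on h C" "h ` C \<subseteq> carrier L"
  shows "partial_order (induced_order h C L)"
proof -
  have antisym: "x = y" if "x \<in> C" "y \<in> C" "h x \<sqsubseteq> h y" "h y \<sqsubseteq> h x" for x y
  proof -
    have "h x = h y"
      using that assms(2) by (intro le_antisym) auto
    then show ?thesis
      using inj_onD[OF assms(1)] that by blast
  qed
  have trans: "h x \<sqsubseteq> h z"
    if "x \<in> C" "y \<in> C" "z \<in> C" "h x \<sqsubseteq> h y" "h y \<sqsubseteq> h z" for x y z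
    using that assms(2) le_trans[of "h x" "h y" "h z"] by (simp add: image_subset_iff)
  show ?thesis
    by unfold_locales (use assms(2) in \<open>auto simp: image_subset_iff intro: antisym trans\<close>)
qed

lemma upper_covers_induced_order_bij:
  assumes bij: "bij_betw h C (carrier L)" and "x \<in> C" "y \<in> C"
  shows "upper_covers (induced_order h C L) x y \<longleftrightarrow> upper_covers L (h x) (h y)"
proof -
  have inj: "inj_on h C" and img: "h ` C = carrier L"
    using bij by (auto simp: bij_betw_def)
  have "(\<exists>z\<in>carrier L. h y \<sqsubset> z \<and> z \<sqsubset> h x) \<longleftrightarrow> (\<exists>z\<in>C. h y \<sqsubset> h z \<and> h z \<sqsubset> h x)"
    unfolding img[symmetric] by blast
  then show ?thesis
    using assms img by (auto simp: upper_covers_def lless_induced_order[OF inj])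
qed

lemma join_irreducible_induced_order_bij:
  assumes bij: "bij_betw h C (carrier L)" and ji: "join_irreducible (induced_order h C L) x"
  shows "join_irreducible L (h x)"
proof -
  have img: "h ` C = carrier L"
    using bij by (simp add: bij_betw_def)
  from ji have x: "x \<in> C" by (simp add: join_irreducible_def)
  from ji obtain y where y: "upper_covers (induced_order h C L) x y"
    and uniq: "\<And>y'. upper_covers (induced_order h C L) x y' \<Longrightarrow> y' = y"
    by (auto simp: join_irreducible_def)
  have yC: "y \<in> C"
    using y by (simp add: upper_covers_def)
  have "upper_covers L (h x) (h y)"
    using y x yC upper_covers_induced_order_bij[OF bij] by blast
  moreover have "y' = h y" if "upper_covers L (h x) y'" for y'
  proof -
    have "y' \<in> h ` C"
      using that img by (simp add: upper_covers_def)
    then obtain z where "z \<in> C" "y' = h z"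
      by blast
    then show ?thesis
      using that x uniq upper_covers_induced_order_bij[OF bij] by blast
  qed
  ultimately show ?thesis
    using x img by (auto simp: join_irreducible_def)
qed

lemma card_up_set_induced_order_bij:
  assumes bij: "bij_betw h C (carrier L)" and "x \<in> C"
  shows "card (up_set (induced_order h C L) x) = card (up_set L (h x))"
proof -
  have inj: "inj_on h C" and img: "h ` C = carrier L"
    using bij by (auto simp: bij_betw_def)
  have "h ` up_set (induced_order h C L) x = up_set L (h x)"
    using img by (auto simp: up_set_def)
  moreover have "inj_on h (up_set (induced_order h C L) x)"
    using inj by (rule inj_on_subset) (simp add: up_set_def)
  ultimately show ?thesis
    using card_image by metis
qed

end

lemma (in lattice) lattice_induced_order_bij:
  assumes bij: "bij_betw h C (carrier L)"
  shows "lattice (induced_order h C L)"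
proof -
  have inj: "inj_on h C" and img: "h ` C = carrier L"
    using bij by (auto simp: bij_betw_def)
  define g where "g = inv_into C h"
  have gC: "g a \<in> C" and hg: "h (g a) = a" if "a \<in> carrier L" for a
    using that img by (auto simp: g_def inv_into_into f_inv_into_f)
  have hC: "h x \<in> carrier L" if "x \<in> C" for x
    using that img by auto
  show ?thesis
  proof (rule lattice_partial_orderI, goal_cases)
    case 1
    show ?case
      using inj img by (simp add: partial_order_induced_order)
  next
    case (2 x y)
    then have "h x \<in> carrier L" "h y \<in> carrier L"
      using hC by auto
    then show ?case
      using gC hg hC join_left join_right join_le by (intro bexI[of _ "g (h x \<squnion> h y)"]) auto
  next
    case (3 x y)
    then have "h x \<in> carrier L" "h y \<in> carrier L"
      using hC by auto
    then show ?case
      using gC hg hC meet_left meet_right meet_le by (intro bexI[of _ "g (h x \<sqinter> h y)"]) auto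
  qed
qed

lemma counterexample_induced_order_bij:
  assumes ce: "counterexample L" and bij: "bij_betw h C (carrier L)"
  shows "counterexample (induced_order h C L)"
proof -
  interpret lattice L
    using ce by (simp add: counterexample_def)
  have card_eq: "card C = card (carrier L)"
    using bij by (rule bij_betw_same_card)
  have "finite C"
    using ce bij bij_betw_finite by (auto simp: counterexample_def)
  moreover have "real (card C) / 2 < real (card (up_set (induced_order h C L) j))"
    if "join_irreducible (induced_order h C L) j" for j
  proof -
    have "j \<in> C"
      using that by (simp add: join_irreducible_def)
    then show ?thesis
      using ce card_eq join_irreducible_induced_order_bij[OF bij that]
        card_up_set_induced_order_bij[OF bij] by (simp add: counterexample_def)
  qed
  ultimately show ?thesis
    using ce card_eq lattice_induced_order_bij[OF bij] by (simp add: counterexample_def)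
qed

lemma counterexample_nat_copy:
  assumes "counterexample L"
  obtains B :: "nat gorder" where "counterexample B" "card (carrier B) = card (carrier L)"
proof -
  have "finite (carrier L)"
    using assms by (simp add: counterexample_def)
  then obtain h where "bij_betw h {0..<card (carrier L)} (carrier L)"
    using ex_bij_betw_nat_finite by blast
  then show ?thesis
    using that counterexample_induced_order_bij[OF assms] by fastforce
qed

lemma (in partial_order) not_meet_irreducible_top:
  assumes "\<And>x. x \<in> carrier L \<Longrightarrow> x \<sqsubseteq> t"
  shows "\<not> meet_irreducible L t"
  using assms by (auto simp: meet_irreducible_def upper_covers_def lless_eq intro: le_antisym)

lemma (in partial_order) meet_irreducible_coatom:
  assumes top: "\<And>x. x \<in> carrier L \<Longrightarrow> x \<sqsubseteq> t" and c: "upper_covers L t c"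
  shows "meet_irreducible L c"
proof -
  have "u = t" if "upper_covers L u c" for u
  proof (rule ccontr)
    assume "u \<noteq> t"
    with that top have "u \<sqsubset> t"
      by (simp add: upper_covers_def lless_eq)
    with that c show False
      by (auto simp: upper_covers_def)
  qed
  with c have "\<exists>!u. upper_covers L u c"
    by blast
  with c show ?thesis
    by (simp add: meet_irreducible_def upper_covers_def)
qed

locale finite_lattice = lattice +
  assumes finite_carrier: "finite (carrier L)"

context finite_lattice
begin

lemma ex_top:
  assumes "carrier L \<noteq> {}"
  obtains t where "t \<in> carrier L" "\<And>x. x \<in> carrier L \<Longrightarrow> x \<sqsubseteq> t"
  using finite_sup_least[OF finite_carrier subset_refl assms] that
  by (auto simp: least_def Upper_def)

lemma ex_coatom:
  assumes "t \<in> carrier L" "\<And>x. x \<in> carrier L \<Longrightarrow> x \<sqsubseteq> t" "card (carrier L) > 1"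
  obtains c where "upper_covers L t c"
proof -
  obtain x where "x \<in> carrier L" "x \<noteq> t"
    using assms(3) by (metis card_le_Suc0_iff_eq finite_carrier not_less One_nat_def)
  with assms(1,2) have "x \<sqsubset> t"
    by (simp add: lless_eq)
  then show ?thesis
    using lower_cover_between[OF finite_carrier \<open>x \<in> carrier L\<close> assms(1)] that by blast
qed

lemma meet_irreducible_less_meet:
  assumes mi: "meet_irreducible L m" and x: "x \<in> carrier L" and y: "y \<in> carrier L"
    and "m \<sqsubset> x" "m \<sqsubset> y"
  shows "m \<sqsubset> x \<sqinter> y"
proof -
  have m: "m \<in> carrier L"
    using mi by (simp add: meet_irreducible_def)
  obtain u where u: "upper_covers L u m" "u \<sqsubseteq> x"
    using upper_cover_between[OF finite_carrier m x \<open>m \<sqsubset> x\<close>] by blast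
  obtain u' where u': "upper_covers L u' m" "u' \<sqsubseteq> y"
    using upper_cover_between[OF finite_carrier m y \<open>m \<sqsubset> y\<close>] by blast
  have "u' = u"
    using mi u u' by (auto simp: meet_irreducible_def)
  have uC: "u \<in> carrier L" and "m \<sqsubset> u"
    using u by (auto simp: upper_covers_def)
  moreover have "u \<sqsubseteq> x \<sqinter> y"
    using u u' \<open>u' = u\<close> uC x y by (simp add: meet_le)
  ultimately show ?thesis
    using m x y by (auto intro: lless_le_trans)
qed

lemma meet_not_meet_irreducible:
  assumes x: "x \<in> carrier L" "\<not> meet_irreducible L x"
    and y: "y \<in> carrier L" "\<not> meet_irreducible L y"
  shows "\<not> meet_irreducible L (x \<sqinter> y)"
proof
  assume mi: "meet_irreducible L (x \<sqinter> y)"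
  with x y have "x \<sqinter> y \<noteq> x" "x \<sqinter> y \<noteq> y"
    by auto
  with x y have "x \<sqinter> y \<sqsubset> x" "x \<sqinter> y \<sqsubset> y"
    by (simp_all add: lless_eq meet_left meet_right)
  then have "x \<sqinter> y \<sqsubset> x \<sqinter> y"
    using meet_irreducible_less_meet[OF mi x(1) y(1)] by blast
  then show False
    by (simp add: lless_eq)
qed

lemma join_irreducible_top:
  assumes t: "t \<in> carrier L" "\<And>x. x \<in> carrier L \<Longrightarrow> x \<sqsubseteq> t"
    and c0: "upper_covers L t c0"
    and below_mi: "\<And>x. x \<in> carrier L \<Longrightarrow> x \<noteq> t \<Longrightarrow> meet_irreducible L x"
  shows "join_irreducible L t"
proof -
  have "c = c0" if c: "upper_covers L t c" for c
  proof (rule ccontr)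
    assume "c \<noteq> c0"
    have cC: "c \<in> carrier L" "c \<sqsubset> t" and c0C: "c0 \<in> carrier L" "c0 \<sqsubset> t"
      using c c0 by (auto simp: upper_covers_def)
    have "\<not> c \<sqsubseteq> c0" "\<not> c0 \<sqsubseteq> c"
      using c c0 cC c0C \<open>c \<noteq> c0\<close> by (auto simp: upper_covers_def lless_eq)
    moreover have "c \<sqinter> c0 \<sqsubseteq> c" "c \<sqinter> c0 \<sqsubseteq> c0"
      using cC c0C by (simp_all add: meet_left meet_right)
    ultimately have less: "c \<sqinter> c0 \<sqsubset> c" "c \<sqinter> c0 \<sqsubset> c0"
      by (auto simp: lless_eq)
    have "c \<sqinter> c0 \<sqsubset> t"
      using lless_trans[OF less(1) cC(2)] cC c0C t(1) by simp
    then have "meet_irreducible L (c \<sqinter> c0)"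
      using below_mi cC c0C by (simp add: lless_eq)
    then have "c \<sqinter> c0 \<sqsubset> c \<sqinter> c0"
      using meet_irreducible_less_meet cC c0C less by blast
    then show False
      by (simp add: lless_eq)
  qed
  with c0 t(1) show ?thesis
    by (auto simp: join_irreducible_def)
qed

lemma join_irreducible_if_strictly_below_le:
  assumes c: "c \<in> carrier L" and j: "j \<in> carrier L" "\<not> j \<sqsubseteq> c"
    and below: "\<And>z. z \<in> carrier L \<Longrightarrow> z \<sqsubset> j \<Longrightarrow> z \<sqsubseteq> c"
  shows "join_irreducible L j"
proof -
  have "c \<sqinter> j \<noteq> j"
    using j(2) meet_left[OF c j(1)] by auto
  then have "c \<sqinter> j \<sqsubset> j"
    using meet_right[OF c j(1)] by (simp add: lless_eq)
  then obtain z0 where z0: "upper_covers L j z0"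
    using lower_cover_between[OF finite_carrier meet_closed[OF c j(1)] j(1)] by blast
  have "z = z0" if z: "upper_covers L j z" for z
  proof -
    have zC: "z \<in> carrier L" "z \<sqsubset> j" and z0C: "z0 \<in> carrier L" "z0 \<sqsubset> j"
      using z z0 by (auto simp: upper_covers_def)
    let ?w = "z \<squnion> z0"
    have wC: "?w \<in> carrier L"
      using zC z0C by simp
    have "?w \<sqsubseteq> c"
      using below zC z0C c by (simp add: join_le)
    then have "?w \<noteq> j"
      using j(2) by auto
    moreover have "?w \<sqsubseteq> j"
      using zC z0C j(1) by (simp add: join_le lless_eq)
    ultimately have "?w \<sqsubset> j"
      by (simp add: lless_eq)
    then have "\<not> z \<sqsubset> ?w" "\<not> z0 \<sqsubset> ?w"
      using z z0 wC by (auto simp: upper_covers_def)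
    moreover have "z \<sqsubseteq> ?w" "z0 \<sqsubseteq> ?w"
      using zC z0C by (simp_all add: join_left join_right)
    ultimately have "?w = z" "?w = z0"
      by (auto simp: lless_eq)
    then show ?thesis
      by simp
  qed
  with z0 j(1) show ?thesis
    by (auto simp: join_irreducible_def)
qed

lemma lattice_induced_order_meet_closed:
  assumes KC: "K \<subseteq> carrier L" and t: "t \<in> K" "\<And>x. x \<in> K \<Longrightarrow> x \<sqsubseteq> t"
    and meet_closed: "\<And>x y. x \<in> K \<Longrightarrow> y \<in> K \<Longrightarrow> x \<sqinter> y \<in> K"
  shows "lattice (induced_order id K L)"
proof (rule lattice_partial_orderI, goal_cases)
  case 1
  show ?case
    using KC by (simp add: partial_order_induced_order)
next
  case (2 x y)
  then have x: "x \<in> K" "x \<in> carrier L" and y: "y \<in> K" "y \<in> carrier L"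
    using KC by auto
  \<comment> \<open>the join in K is a minimal upper bound within K; meet-closure makes it least\<close>
  let ?U = "{u \<in> K. x \<sqsubseteq> u \<and> y \<sqsubseteq> u}"
  have "t \<in> ?U"
    using t x y by simp
  moreover have "finite ?U"
    using finite_subset[OF KC finite_carrier] by simp
  moreover have "?U \<subseteq> carrier L"
    using KC by blast
  ultimately obtain s where s: "s \<in> ?U" and min: "\<forall>w\<in>?U. \<not> w \<sqsubset> s"
    using finite_has_minimal[of ?U] by blast
  have sC: "s \<in> carrier L"
    using s KC by auto
  have "s \<sqsubseteq> u" if u: "u \<in> K" "x \<sqsubseteq> u" "y \<sqsubseteq> u" for u
  proof -
    have uC: "u \<in> carrier L"
      using u KC by auto
    have "s \<sqinter> u \<in> ?U"
      using s u x y sC uC meet_closed by (simp add: meet_le)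
    moreover have "s \<sqinter> u \<sqsubseteq> s"
      using sC uC by (rule meet_left)
    ultimately have "s \<sqinter> u = s"
      using min lless_eq by blast
    then show ?thesis
      using sC uC meet_right by metis
  qed
  with s show ?case
    by (intro bexI[of _ s]) auto
next
  case (3 x y)
  then show ?case
    using KC meet_closed meet_left meet_right meet_le
    by (intro bexI[of _ "x \<sqinter> y"]) (auto simp: subset_iff)
qed

end

lemma (in lattice) up_set_induced_order_meet_closed:
  assumes KC: "K \<subseteq> carrier L" and meet_closed: "\<And>x y. x \<in> K \<Longrightarrow> y \<in> K \<Longrightarrow> x \<sqinter> y \<in> K"
    and a: "a \<in> K" and c: "c \<in> carrier L" and j: "j \<in> carrier L" "j \<sqsubseteq> a" "\<not> j \<sqsubseteq> c"
    and below: "\<And>b. b \<in> K \<Longrightarrow> b \<sqsubset> a \<Longrightarrow> b \<sqsubseteq> c"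
  shows "up_set (induced_order id K L) a = up_set L j \<inter> K"
proof
  show "up_set (induced_order id K L) a \<subseteq> up_set L j \<inter> K"
    using KC a j le_trans[of j a] by (auto simp: up_set_def subset_iff)
next
  show "up_set L j \<inter> K \<subseteq> up_set (induced_order id K L) a"
  proof
    fix x assume "x \<in> up_set L j \<inter> K"
    then have x: "x \<in> K" "x \<in> carrier L" "j \<sqsubseteq> x"
      by (auto simp: up_set_def)
    have aC: "a \<in> carrier L"
      using a KC by auto
    have "j \<sqsubseteq> x \<sqinter> a"
      using x j aC by (simp add: meet_le)
    then have "\<not> x \<sqinter> a \<sqsubset> a"
      using below[of "x \<sqinter> a"] meet_closed[OF x(1) a] le_trans[of j "x \<sqinter> a" c] x aC c j
      by auto
    then have "x \<sqinter> a = a"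
      using x aC meet_right by (auto simp: lless_eq)
    then have "a \<sqsubseteq> x"
      using x aC meet_left by metis
    with x show "x \<in> up_set (induced_order id K L) a"
      by (simp add: up_set_def)
  qed
qed

context finite_lattice
begin

lemma join_irreducible_induced_order_meet_closed:
  assumes KC: "K \<subseteq> carrier L" and meet_closed: "\<And>x y. x \<in> K \<Longrightarrow> y \<in> K \<Longrightarrow> x \<sqinter> y \<in> K"
    and a: "join_irreducible (induced_order id K L) a"
  obtains j where "join_irreducible L j" "up_set (induced_order id K L) a = up_set L j \<inter> K"
proof -
  interpret K: partial_order "induced_order id K L"
    using KC by (simp add: partial_order_induced_order)
  have lessK: "x \<sqsubset>\<^bsub>induced_order id K L\<^esub> y \<longleftrightarrow> x \<sqsubset> y" if "x \<in> K" "y \<in> K" for x y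
    using lless_induced_order[of id K x y] that by simp
  have aK: "a \<in> K" and aC: "a \<in> carrier L"
    using a KC by (auto simp: join_irreducible_def)
  obtain c where c: "upper_covers (induced_order id K L) a c"
    and below: "\<And>b. b \<in> K \<Longrightarrow> b \<sqsubset>\<^bsub>induced_order id K L\<^esub> a \<Longrightarrow> b \<sqsubseteq> c"
    using K.join_irreducible_lower_cover_greatest[OF _ a] finite_subset[OF KC finite_carrier] by auto
  have cK: "c \<in> K" and ca: "c \<sqsubset> a"
    using c lessK[of c a] aK by (auto simp: upper_covers_def)
  have cC: "c \<in> carrier L"
    using cK KC by auto
  let ?Y = "{y \<in> carrier L. y \<sqsubseteq> a \<and> \<not> y \<sqsubseteq> c}"
  have "a \<in> ?Y"
    using aC cC ca le_antisym by (auto simp: lless_eq)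
  moreover have "finite ?Y"
    using finite_carrier by simp
  ultimately obtain j where j: "j \<in> ?Y" and min: "\<forall>y\<in>?Y. \<not> y \<sqsubset> j"
    using finite_has_minimal[of ?Y] by blast
  have jC: "j \<in> carrier L" "j \<sqsubseteq> a" "\<not> j \<sqsubseteq> c"
    using j by auto
  have "z \<sqsubseteq> c" if "z \<in> carrier L" "z \<sqsubset> j" for z
  proof -
    have "z \<sqsubseteq> a"
      using that jC aC le_trans[of z j a] by (simp add: lless_eq)
    with that min show ?thesis
      by blast
  qed
  then have "join_irreducible L j"
    using join_irreducible_if_strictly_below_le[OF cC jC(1,3)] by blast
  moreover have "up_set (induced_order id K L) a = up_set L j \<inter> K"
    using up_set_induced_order_meet_closed[OF KC meet_closed aK cC jC] below lessK aK by blast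
  ultimately show ?thesis
    using that by blast
qed

lemma counterexample_non_meet_irreducibles:
  defines "K \<equiv> carrier L - {m. meet_irreducible L m}"
  assumes ce: "counterexample L"
    and few: "\<And>j. join_irreducible L j \<Longrightarrow>
      real (card {m. meet_irreducible L m \<and> j \<sqsubseteq> m}) \<le> real (card {m. meet_irreducible L m}) / 2"
    and "card K > 1"
  shows "counterexample (induced_order id K L)"
proof -
  let ?M = "{m. meet_irreducible L m}"
  have KC: "K \<subseteq> carrier L" and MC: "?M \<subseteq> carrier L"
    by (auto simp: K_def meet_irreducible_def)
  have finK: "finite K"
    using finite_subset[OF KC finite_carrier] .
  have card_K: "card K = card (carrier L) - card ?M" and card_M: "card ?M \<le> card (carrier L)"
    using MC finite_carrier by (simp_all add: K_def card_Diff_subset finite_subset card_mono)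
  have "carrier L \<noteq> {}"
    using KC \<open>card K > 1\<close> by auto
  then obtain t where t: "t \<in> carrier L" "\<And>x. x \<in> carrier L \<Longrightarrow> x \<sqsubseteq> t"
    using ex_top by blast
  have tK: "t \<in> K"
    using t not_meet_irreducible_top by (simp add: K_def)
  have meet_closed: "x \<sqinter> y \<in> K" if "x \<in> K" "y \<in> K" for x y
    using that meet_not_meet_irreducible by (simp add: K_def)
  have "real (card K) / 2 < real (card (up_set (induced_order id K L) a))"
    if a: "join_irreducible (induced_order id K L) a" for a
  proof -
    obtain j where j: "join_irreducible L j" and up: "up_set (induced_order id K L) a = up_set L j \<inter> K"
      using join_irreducible_induced_order_meet_closed[OF KC meet_closed a] by blast
    have sub: "{m. meet_irreducible L m \<and> j \<sqsubseteq> m} \<subseteq> up_set L j"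
      by (auto simp: up_set_def meet_irreducible_def)
    have "finite (up_set L j)"
      using finite_carrier by (simp add: up_set_def)
    moreover have "up_set (induced_order id K L) a = up_set L j - {m. meet_irreducible L m \<and> j \<sqsubseteq> m}"
      using up by (auto simp: K_def up_set_def)
    ultimately have "real (card (up_set (induced_order id K L) a))
        = real (card (up_set L j)) - real (card {m. meet_irreducible L m \<and> j \<sqsubseteq> m})"
      using sub by (simp add: card_Diff_subset of_nat_diff card_mono finite_subset)
    moreover have "real (card (carrier L)) / 2 < real (card (up_set L j))"
      using ce j by (simp add: counterexample_def)
    ultimately show ?thesis
      using few[OF j] card_K card_M by (simp add: of_nat_diff)
  qed
  moreover have "lattice (induced_order id K L)"
    using lattice_induced_order_meet_closed[OF KC tK _ meet_closed] t KC by blast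
  ultimately show ?thesis
    using finK \<open>card K > 1\<close> by (simp add: counterexample_def)
qed

lemma ex_smaller_counterexample:
  assumes ce: "counterexample L"
    and few: "\<And>j. join_irreducible L j \<Longrightarrow>
      real (card {m. meet_irreducible L m \<and> j \<sqsubseteq> m}) \<le> real (card {m. meet_irreducible L m}) / 2"
  obtains B :: "nat gorder" where "counterexample B" "card (carrier B) < card (carrier L)"
proof -
  define K where "K = carrier L - {m. meet_irreducible L m}"
  have card_L: "card (carrier L) > 1"
    using ce by (simp add: counterexample_def)
  then have "carrier L \<noteq> {}"
    by auto
  then obtain t where t: "t \<in> carrier L" "\<And>x. x \<in> carrier L \<Longrightarrow> x \<sqsubseteq> t"
    using ex_top by blast
  obtain c0 where c0: "upper_covers L t c0"
    using ex_coatom[OF t card_L] .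
  have "c0 \<in> carrier L - K"
    using meet_irreducible_coatom[OF t(2) c0] by (simp add: K_def meet_irreducible_def)
  then have card_K: "card K < card (carrier L)"
    using finite_carrier by (intro psubset_card_mono) (auto simp: K_def)
  show thesis
  proof (cases "card K > 1")
    case True
    then have "counterexample (induced_order id K L)"
      using counterexample_non_meet_irreducibles[OF ce few] by (simp add: K_def)
    then obtain B :: "nat gorder"
      where "counterexample B" "card (carrier B) = card (carrier (induced_order id K L))"
      by (rule counterexample_nat_copy)
    with card_K that show thesis
      by simp
  next
    case False
    have "finite K" "t \<in> K"
      using finite_carrier t not_meet_irreducible_top by (simp_all add: K_def)
    with False have "K = {t}"
      by (auto simp: not_less card_le_Suc0_iff_eq)
    then have "meet_irreducible L x" if "x \<in> carrier L" "x \<noteq> t" for x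
      using that by (auto simp: K_def)
    then have "join_irreducible L t"
      using join_irreducible_top[OF t c0] by blast
    moreover have "up_set L t = {t}"
      using t by (auto simp: up_set_def intro: le_antisym)
    ultimately have "real (card (carrier L)) < 2"
      using ce by (auto simp: counterexample_def)
    with card_L show thesis
      by simp
  qed
qed

end

theorem corollary2p10:
  fixes L :: "'a gorder"
  assumes "min_counterexample L"
  shows "\<exists>j. join_irreducible L j \<and>
    real (card {m. meet_irreducible L m \<and> j \<sqsubseteq>\<^bsub>L\<^esub> m})
      > real (card {m. meet_irreducible L m}) / 2"
proof (rule ccontr)
  assume "\<not> ?thesis"
  then have few: "\<And>j. join_irreducible L j \<Longrightarrow>
      real (card {m. meet_irreducible L m \<and> j \<sqsubseteq>\<^bsub>L\<^esub> m}) \<le> real (card {m. meet_irreducible L m}) / 2"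
    by (auto simp: not_less)
  from assms have ce: "counterexample L"
    and minimal: "\<not> (\<exists>L' :: nat gorder. counterexample L' \<and> card (carrier L') < card (carrier L))"
    by (simp_all add: min_counterexample_def)
  interpret finite_lattice L
    using ce by (simp add: counterexample_def finite_lattice_def finite_lattice_axioms_def)
  obtain B :: "nat gorder" where "counterexample B" "card (carrier B) < card (carrier L)"
    using ex_smaller_counterexample[OF ce few] .
  with minimal show False
    by blast
qed

end
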